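(* Let $\phi$ be the real root of $x^3=x^2+x+1$. For any positive integer $k$ and any integer $n>0.2\phi^{3k/2}$, there exists a positive tribonacci sequence of length $k$ terminating at $n$.
   Context: A tribonacci sequence of length $k$ is a sequence of integers $\langle a_i\rangle_{i=1}^k$ such that $a_i=a_{i-1}+a_{i-2}+a_{i-3}$ for all $4\le i\le k$. It terminates at $a_k$, and it is positive if $a_1,a_2,a_3>0$ (for length less than 3, all terms are required to be positive). *)

theory Defs
  imports Complex_Main
begin

text \<open>A sequence of length k is a function a :: nat \<Rightarrow> int, of which only the
  values a 1, ..., a k matter.\<close>

definition tribonacci_seq :: "nat \<Rightarrow> (nat \<Rightarrow> int) \<Rightarrow> bool" where
  "tribonacci_seq k a \<longleftrightarrow>
     (\<forall>i. 4 \<le> i \<and> i \<le> k \<longrightarrow> a i = a (i - 1) + a (i - 2) + a (i - 3))"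

definition positive_tribonacci :: "nat \<Rightarrow> (nat \<Rightarrow> int) \<Rightarrow> bool" where
  "positive_tribonacci k a \<longleftrightarrow>
     tribonacci_seq k a \<and> (\<forall>i. 1 \<le> i \<and> i \<le> min k 3 \<longrightarrow> a i > 0)"

end

theory Submission
  imports Defs
begin

text \<open>Run the tribonacci recursion backwards from the last three terms round (n / phi^2),
  round (n / phi), n. In the eigenbasis of the step (x, y, z) \<mapsto> (y, z, x + y + z), a backward
  step divides the coordinate l along the dominant eigenvector (1, phi, phi^2) by phi and multiplies
  a quadratic norm Q of the complementary part, where the eigenvalues are complex of modulus
  phi^(-1/2), by phi; so l^2 / Q drops by the factor phi^3 per step. A triple with l > 0 and
  l^2 > 95 Q lies in a cone around (1, phi, phi^2) and is therefore positive. Rounding gives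
  l \<ge> 2.79 n and Q \<le> 0.69 at the end, and n > 0.2 phi^(3k/2) keeps l^2 / Q above 95 after the
  k - 3 backward steps down to the first three terms.\<close>

lemma tribonacci_constant_bounds:
  fixes p :: real
  assumes p: "p^3 = p^2 + p + 1"
  shows "18392/10000 < p" and "p < 18393/10000"
proof -
  have "p^3 > 0"
    using p zero_le_power2[of "p + 1/2"] by (simp add: power2_eq_square algebra_simps)
  then have "p + 1 > 0"
    by (simp add: zero_less_power_eq)
  moreover have "p^2 * (p - 1) = p + 1"
    using p by (simp add: algebra_simps power2_eq_square power3_eq_cube)
  ultimately have "p > 1"
    by (metis zero_less_mult_iff zero_le_power2 not_le diff_gt_0_iff_gt)
  have factor: "(p - c) * (p^2 + p*c + c^2 - p - c - 1) = c^2 + c + 1 - c^3" for c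
    using p by (simp add: algebra_simps power2_eq_square power3_eq_cube)
  have cofactor_pos: "p^2 + p*c + c^2 - p - c - 1 > 0" if "c \<ge> 1.8" for c
  proof -
    have "p^2 \<ge> p" "p*c \<ge> c" "c^2 \<ge> 1.8*c"
      using \<open>p > 1\<close> that by (simp_all add: power2_eq_square)
    then show ?thesis using that by linarith
  qed
  have "(p - 18392/10000) * (p^2 + p*(18392/10000) + (18392/10000)^2 - p - (18392/10000) - 1) > 0"
    unfolding factor by (simp add: power2_eq_square power3_eq_cube)
  then show "18392/10000 < p"
    using cofactor_pos[of "18392/10000"] by (simp add: zero_less_mult_iff)
  have "(p - 18393/10000) * (p^2 + p*(18393/10000) + (18393/10000)^2 - p - (18393/10000) - 1) < 0"
    unfolding factor by (simp add: power2_eq_square power3_eq_cube)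
  then show "p < 18393/10000"
    using cofactor_pos[of "18393/10000"] by (simp add: mult_less_0_iff)
qed

lemma tribonacci_constant_sq_bounds:
  fixes p :: real
  assumes p: "p^3 = p^2 + p + 1"
  shows "338265/100000 < p^2" and "p^2 < 338303/100000"
proof -
  note bounds = tribonacci_constant_bounds[OF p]
  have "(18392/10000) * (18392/10000) < p * p"
    using bounds by (intro mult_strict_mono) auto
  then show "338265/100000 < p^2" by (simp add: power2_eq_square)
  have "p * p < (18393/10000) * (18393/10000)"
    using bounds by (intro mult_strict_mono) auto
  then show "p^2 < 338303/100000" by (simp add: power2_eq_square)
qed

text \<open>On consecutive terms (x, y, z), \<open>dominant_coord\<close> is a left eigenvector of the step
  (x, y, z) \<mapsto> (y, z, x + y + z) for the eigenvalue p, and \<open>subdominant_norm\<close> is a quadratic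
  form vanishing on the eigenvector (1, p, p^2) and positive definite on the complementary plane.\<close>

definition dominant_coord :: "real \<Rightarrow> real \<Rightarrow> real \<Rightarrow> real \<Rightarrow> real" where
  "dominant_coord p x y z = x + (p^2 - p) * y + p * z"

definition subdominant_norm :: "real \<Rightarrow> real \<Rightarrow> real \<Rightarrow> real \<Rightarrow> real" where
  "subdominant_norm p x y z =
     (x - (p^2 - p - 1) * y)^2 + (1 - p) * (x - (p^2 - p - 1) * y) * (z - p * y)
       + (p^2 - p - 1) * (z - p * y)^2"

lemma dominant_coord_step:
  fixes x y z :: real
  assumes "p^3 = p^2 + p + 1"
  shows "dominant_coord p y z (x + y + z) = p * dominant_coord p x y z"
  using assms unfolding dominant_coord_def by algebra

lemma subdominant_norm_step:
  fixes x y z :: real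
  assumes "p^3 = p^2 + p + 1"
  shows "p * subdominant_norm p y z (x + y + z) = subdominant_norm p x y z"
  using assms unfolding subdominant_norm_def by algebra

fun tribonacci_back :: "int \<Rightarrow> int \<Rightarrow> int \<Rightarrow> nat \<Rightarrow> int" where
  "tribonacci_back a b c 0 = c"
| "tribonacci_back a b c (Suc 0) = b"
| "tribonacci_back a b c (Suc (Suc 0)) = a"
| "tribonacci_back a b c (Suc (Suc (Suc j))) =
     tribonacci_back a b c j - tribonacci_back a b c (Suc j) - tribonacci_back a b c (Suc (Suc j))"

lemma tribonacci_back_rec:
  "tribonacci_back a b c j =
     tribonacci_back a b c (j + 1) + tribonacci_back a b c (j + 2) + tribonacci_back a b c (j + 3)"
  by (simp add: numeral_3_eq_3 numeral_2_eq_2)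

lemma tribonacci_seq_back: "tribonacci_seq k (\<lambda>i. tribonacci_back a b c (k - i))"
  unfolding tribonacci_seq_def
proof (intro allI impI)
  fix i assume i: "4 \<le> i \<and> i \<le> k"
  then have "k - (i - 1) = (k - i) + 1" "k - (i - 2) = (k - i) + 2" "k - (i - 3) = (k - i) + 3"
    by auto
  then show "tribonacci_back a b c (k - i) = tribonacci_back a b c (k - (i - 1))
      + tribonacci_back a b c (k - (i - 2)) + tribonacci_back a b c (k - (i - 3))"
    by (simp only:) (rule tribonacci_back_rec)
qed

lemma dominant_coord_back:
  assumes p: "p^3 = p^2 + p + 1"
  shows "p^j * dominant_coord p (tribonacci_back a b c (j + 2)) (tribonacci_back a b c (j + 1))
           (tribonacci_back a b c j) = dominant_coord p a b c"
proof (induction j)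
  case 0
  then show ?case by (simp add: numeral_2_eq_2)
next
  case (Suc j)
  define x y z where "x = tribonacci_back a b c (j + 3)"
    and "y = tribonacci_back a b c (j + 2)" and "z = tribonacci_back a b c (j + 1)"
  have "tribonacci_back a b c j = x + y + z"
    unfolding x_def y_def z_def using tribonacci_back_rec[of a b c j] by linarith
  then have "p * p^j * dominant_coord p x y z = p^j * dominant_coord p y z (tribonacci_back a b c j)"
    using dominant_coord_step[OF p, where x = x and y = y and z = z] by (simp add: ac_simps)
  moreover have "Suc j + 2 = j + 3" "Suc j + 1 = j + 2"
    "tribonacci_back a b c (Suc j) = tribonacci_back a b c (j + 1)" by simp_all
  ultimately show ?case
    using Suc.IH unfolding x_def y_def z_def by (simp only: power_Suc mult.assoc)
qed

lemma subdominant_norm_back: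
  assumes p: "p^3 = p^2 + p + 1"
  shows "subdominant_norm p (tribonacci_back a b c (j + 2)) (tribonacci_back a b c (j + 1))
           (tribonacci_back a b c j) = p^j * subdominant_norm p a b c"
proof (induction j)
  case 0
  then show ?case by (simp add: numeral_2_eq_2)
next
  case (Suc j)
  define x y z where "x = tribonacci_back a b c (j + 3)"
    and "y = tribonacci_back a b c (j + 2)" and "z = tribonacci_back a b c (j + 1)"
  have "tribonacci_back a b c j = x + y + z"
    unfolding x_def y_def z_def using tribonacci_back_rec[of a b c j] by linarith
  then have "subdominant_norm p x y z = p * subdominant_norm p y z (tribonacci_back a b c j)"
    using subdominant_norm_step[OF p, where x = x and y = y and z = z] by (simp add: ac_simps)
  moreover have "Suc j + 2 = j + 3" "Suc j + 1 = j + 2"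
    "tribonacci_back a b c (Suc j) = tribonacci_back a b c (j + 1)" by simp_all
  ultimately show ?case
    using Suc.IH unfolding x_def y_def z_def by (simp only: power_Suc mult.assoc)
qed

lemma quadratic_form_nonneg:
  fixes A B D X Z :: real
  assumes "0 < A" and "B^2 \<le> 4 * A * D"
  shows "0 \<le> A * X^2 + B * X * Z + D * Z^2"
proof -
  have "0 \<le> (2 * A * X + B * Z)^2 + (4 * A * D - B^2) * Z^2"
    using assms(2) by simp
  also have "\<dots> = 4 * A * (A * X^2 + B * X * Z + D * Z^2)"
    by (simp add: algebra_simps power2_eq_square)
  finally show ?thesis
    using assms(1) by (simp add: zero_le_mult_iff)
qed

lemma linear_form_sq_le:
  fixes c B D \<alpha> \<beta> X Z :: real
  assumes "\<alpha>^2 < c"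
    and "(c * B - 2 * \<alpha> * \<beta>)^2 \<le> 4 * (c - \<alpha>^2) * (c * D - \<beta>^2)"
  shows "(\<alpha> * X + \<beta> * Z)^2 \<le> c * (X^2 + B * X * Z + D * Z^2)"
proof -
  have "0 \<le> (c - \<alpha>^2) * X^2 + (c * B - 2 * \<alpha> * \<beta>) * X * Z + (c * D - \<beta>^2) * Z^2"
    using assms by (intro quadratic_form_nonneg) auto
  also have "\<dots> = c * (X^2 + B * X * Z + D * Z^2) - (\<alpha> * X + \<beta> * Z)^2"
    by (simp add: algebra_simps power2_eq_square)
  finally show ?thesis
    by simp
qed

lemma linear_form_lt_dominant_coord:
  fixes p x y z \<alpha> \<beta> :: real
  assumes pos: "0 < dominant_coord p x y z"
    and dom: "95 * subdominant_norm p x y z < (dominant_coord p x y z)^2"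
    and "\<alpha>^2 < 95"
    and "0 \<le> 4 * (95 - \<alpha>^2) * (95 * (p^2 - p - 1) - \<beta>^2) - (95 * (1 - p) - 2 * \<alpha> * \<beta>)^2"
  shows "\<alpha> * (x - (p^2 - p - 1) * y) + \<beta> * (z - p * y) < dominant_coord p x y z"
proof (rule power_less_imp_less_base)
  have "(\<alpha> * (x - (p^2 - p - 1) * y) + \<beta> * (z - p * y))^2 \<le> 95 * subdominant_norm p x y z"
    using linear_form_sq_le[where c = 95 and B = "1 - p" and D = "p^2 - p - 1"] assms(3,4)
    unfolding subdominant_norm_def by simp
  then show "(\<alpha> * (x - (p^2 - p - 1) * y) + \<beta> * (z - p * y))^2 < (dominant_coord p x y z)^2"
    using dom by simp
qed (use pos in simp)

lemma positive_if_dominant: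
  fixes p x y z :: real
  assumes p: "p^3 = p^2 + p + 1"
    and pos: "0 < dominant_coord p x y z"
    and dom: "95 * subdominant_norm p x y z < (dominant_coord p x y z)^2"
  shows "0 < x" and "0 < y" and "0 < z"
proof -
  note bounds = tribonacci_constant_bounds[OF p] tribonacci_constant_sq_bounds[OF p]
  note below = linear_form_lt_dominant_coord[OF pos dom]
  define l X Z where "l = dominant_coord p x y z"
    and "X = x - (p^2 - p - 1) * y" and "Z = z - p * y"
  have "4 * 94 * (95 * (p^2 - p - 1) - p^2) - (95 * (1 - p) - 2 * p)^2
      = 25935 * p^2 - 17290 * p - 44745"
    by (simp add: algebra_simps power2_eq_square)
  then have y_form: "X + p * Z < l"
    using below[of 1 p] bounds unfolding l_def X_def Z_def by simp
  have "(- 2 - 2 * p - p^2)^2 = 9 + 14 * p + 14 * p^2"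
    using p by algebra
  moreover have "4 * (95 - (- 2 - 2 * p - p^2)^2) * (95 * (p^2 - p - 1) - p^2)
      - (95 * (1 - p) - 2 * (- 2 - 2 * p - p^2) * p)^2 = 24415 * p^2 - 19570 * p - 46265"
    using p by algebra
  ultimately have x_form: "(- 2 - 2 * p - p^2) * X + p * Z < l"
    using below[of "- 2 - 2 * p - p^2" p] bounds unfolding l_def X_def Z_def by simp
  have "4 * 94 * (95 * (p^2 - p - 1) - (1 - 3 * p + p^2)^2)
      - (95 * (1 - p) - 2 * (1 - 3 * p + p^2))^2 = 25175 * p^2 - 15770 * p - 43225"
    using p by algebra
  then have z_form: "X + (1 - 3 * p + p^2) * Z < l"
    using below[of 1 "1 - 3 * p + p^2"] bounds unfolding l_def X_def Z_def by simp
  \<comment> \<open>Solving for x, y, z in the coordinates l, X, Z; the factor N is the derivative of the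
    characteristic polynomial at p.\<close>
  define N where "N = 3 * p^2 - 2 * p - 1"
  have "0 < N" "0 < p"
    using bounds by (simp_all add: N_def)
  have "N * y = l - (X + p * Z)"
    unfolding N_def l_def X_def Z_def dominant_coord_def by (simp add: algebra_simps power2_eq_square)
  moreover have "p * N * x = l - ((- 2 - 2 * p - p^2) * X + p * Z)"
    unfolding N_def l_def X_def Z_def dominant_coord_def using p by algebra
  moreover have "N * z = p * (l - (X + (1 - 3 * p + p^2) * Z))"
    unfolding N_def l_def X_def Z_def dominant_coord_def using p by algebra
  ultimately have "0 < N * y" "0 < p * N * x" "0 < N * z"
    using x_form y_form z_form \<open>0 < p\<close> by simp_all
  then show "0 < x" "0 < y" "0 < z"
    using \<open>0 < N\<close> mult_pos_pos[OF \<open>0 < p\<close> \<open>0 < N\<close>] by (auto simp: zero_less_mult_iff)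
qed

lemma tribonacci_back_pos_if_dominant:
  fixes p :: real
  assumes p: "p^3 = p^2 + p + 1"
    and pos: "0 < dominant_coord p a b c"
    and dom: "95 * subdominant_norm p a b c * p^(3 * j) < (dominant_coord p a b c)^2"
  shows "0 < tribonacci_back a b c (j + 2)" and "0 < tribonacci_back a b c (j + 1)"
    and "0 < tribonacci_back a b c j"
proof -
  define x y z :: real where "x = tribonacci_back a b c (j + 2)"
    and "y = tribonacci_back a b c (j + 1)" and "z = tribonacci_back a b c j"
  have l: "p^j * dominant_coord p x y z = dominant_coord p a b c"
    unfolding x_def y_def z_def by (rule dominant_coord_back[OF p])
  have q: "subdominant_norm p x y z = p^j * subdominant_norm p a b c"
    unfolding x_def y_def z_def by (rule subdominant_norm_back[OF p])
  have "0 < p^j"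
    using tribonacci_constant_bounds[OF p] by simp
  moreover have "0 < p^j * dominant_coord p x y z"
    using pos l by simp
  ultimately have "0 < dominant_coord p x y z"
    using zero_less_mult_pos by blast
  moreover have "95 * subdominant_norm p x y z < (dominant_coord p x y z)^2"
  proof (rule mult_left_less_imp_less)
    have "(p^j)^2 * (95 * subdominant_norm p x y z) = 95 * subdominant_norm p a b c * ((p^j)^2 * p^j)"
      unfolding q by (simp add: algebra_simps)
    also have "(p^j)^2 * p^j = p^(3 * j)"
      unfolding mult.commute[of 3 j] power_mult by (simp add: power2_eq_square power3_eq_cube)
    finally show "(p^j)^2 * (95 * subdominant_norm p x y z) < (p^j)^2 * (dominant_coord p x y z)^2"
      using dom unfolding power_mult_distrib[symmetric] l by simp
  qed simp
  ultimately have "0 < x" "0 < y" "0 < z"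
    using positive_if_dominant[OF p] by blast+
  then show "0 < tribonacci_back a b c (j + 2)" "0 < tribonacci_back a b c (j + 1)"
    "0 < tribonacci_back a b c j"
    unfolding x_def y_def z_def by simp_all
qed

lemma positive_tribonacci_of_back:
  assumes "0 < tribonacci_back a b c (j + 2)" and "0 < tribonacci_back a b c (j + 1)"
    and "0 < tribonacci_back a b c j"
  shows "positive_tribonacci (j + 3) (\<lambda>i. tribonacci_back a b c (j + 3 - i))"
proof -
  have "0 < tribonacci_back a b c (j + 3 - i)" if "1 \<le> i \<and> i \<le> min (j + 3) 3" for i
  proof -
    from that consider "i = 1" | "i = 2" | "i = 3"
      by linarith
    then show ?thesis
      using assms by cases simp_all
  qed
  then show ?thesis
    using tribonacci_seq_back unfolding positive_tribonacci_def by blast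
qed

lemma dominant_coord_near_eigenvector:
  fixes p r d1 d2 :: real
  assumes p: "p^3 = p^2 + p + 1"
    and r: "7.2 \<le> r" and d1: "\<bar>d1\<bar> \<le> 1/2" and d2: "\<bar>d2\<bar> \<le> 1/2"
  shows "279/100 * r \<le> dominant_coord p (r * (p^2 - p - 1)^2 + d1) (r * (p^2 - p - 1) + d2) r"
proof -
  note bounds = tribonacci_constant_bounds[OF p] tribonacci_constant_sq_bounds[OF p]
  have "- 772/1000 \<le> (p^2 - p) * (- 1/2)"
    using bounds by simp
  also have "\<dots> \<le> (p^2 - p) * d2"
    using d2 bounds by (intro mult_left_mono) auto
  finally have "- 772/1000 \<le> (p^2 - p) * d2" .
  moreover have "r * (297/100) \<le> r * (4 * p - p^2 - 1)"
    using r bounds by (intro mult_left_mono) auto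
  moreover have "dominant_coord p (r * (p^2 - p - 1)^2 + d1) (r * (p^2 - p - 1) + d2) r
      = r * (4 * p - p^2 - 1) + d1 + (p^2 - p) * d2"
    unfolding dominant_coord_def using p by algebra
  ultimately show ?thesis
    using r d1 by linarith
qed

lemma subdominant_norm_near_eigenvector:
  fixes p r d1 d2 :: real
  assumes p: "p^3 = p^2 + p + 1"
    and d1: "\<bar>d1\<bar> \<le> 1/2" and d2: "\<bar>d2\<bar> \<le> 1/2"
  shows "subdominant_norm p (r * (p^2 - p - 1)^2 + d1) (r * (p^2 - p - 1) + d2) r \<le> 69/100"
proof -
  note bounds = tribonacci_constant_bounds[OF p] tribonacci_constant_sq_bounds[OF p]
  have "subdominant_norm p (r * (p^2 - p - 1)^2 + d1) (r * (p^2 - p - 1) + d2) r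
      = d1^2 + (2 + p - p^2) * (d1 * d2) + (1 + 2 * p - p^2) * d2^2"
    unfolding subdominant_norm_def using p by algebra
  moreover have "d1^2 \<le> 1/4" "d2^2 \<le> 1/4"
    using d1 d2 power2_le_iff_abs_le[of "1/2::real"] by (simp_all add: power_divide)
  moreover have "\<bar>d1\<bar> * \<bar>d2\<bar> \<le> 1/2 * (1/2)"
    using d1 d2 by (intro mult_mono) auto
  moreover have "(2 + p - p^2) * (d1 * d2) \<le> 4567/10000 * (\<bar>d1\<bar> * \<bar>d2\<bar>)"
  proof -
    have "(2 + p - p^2) * (d1 * d2) \<le> (2 + p - p^2) * (\<bar>d1\<bar> * \<bar>d2\<bar>)"
      using bounds by (intro mult_left_mono) (simp_all add: abs_mult[symmetric])
    also have "\<dots> \<le> 4567/10000 * (\<bar>d1\<bar> * \<bar>d2\<bar>)"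
      using bounds by (intro mult_right_mono) simp_all
    finally show ?thesis .
  qed
  moreover have "(1 + 2 * p - p^2) * d2^2 \<le> 13/10 * (1/4)"
    using bounds \<open>d2^2 \<le> 1/4\<close> by (intro mult_mono) simp_all
  ultimately show ?thesis
    by linarith
qed

lemma above_threshold_bounds:
  fixes p r :: real and m :: nat
  assumes p: "p^3 = p^2 + p + 1" and m: "1 \<le> m"
    and r: "0.2 * p powr (3 * real (m + 3) / 2) < r"
  shows "952/100 * p^(3 * m) < r^2" and "7.2 \<le> r"
proof -
  note bounds = tribonacci_constant_bounds[OF p] tribonacci_constant_sq_bounds[OF p]
  define P where "P = p^(3 * m)"
  have p3: "6.2 \<le> p^3"
    using p bounds by simp
  have "(p powr (3 * real (m + 3) / 2))^2 = p powr (2 * (3 * real (m + 3) / 2))"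
    using bounds by (simp add: powr_power)
  also have "\<dots> = p powr real (3 * m + 9)"
    by (rule arg_cong[where f = "(powr) p"]) simp
  also have "\<dots> = p^(3 * m + 9)"
    using bounds by (intro powr_realpow) simp
  also have "\<dots> = P * (p^3)^3"
    unfolding P_def by (simp add: power_add power_mult[symmetric])
  finally have powr_sq: "(p powr (3 * real (m + 3) / 2))^2 = P * (p^3)^3" .
  have "0 < P"
    using bounds unfolding P_def by simp
  then have "952/100 * P \<le> 4/100 * (P * 6.2^3)"
    by (simp add: power3_eq_cube)
  also have "\<dots> \<le> 4/100 * (P * (p^3)^3)"
    using p3 \<open>0 < P\<close> by (intro mult_left_mono power_mono) auto
  also have "\<dots> = (0.2 * p powr (3 * real (m + 3) / 2))^2"
    unfolding power_mult_distrib powr_sq by (simp add: power2_eq_square)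
  also have "\<dots> < r^2"
    using r by (intro power_strict_mono) auto
  finally show less: "952/100 * P < r^2" unfolding P_def .
  have "p^3 \<le> P"
    using m bounds unfolding P_def by (intro power_increasing) auto
  then have "7.2^2 < r^2"
    using less p3 by (simp add: power2_eq_square)
  moreover have "0 \<le> r"
    using r powr_ge_zero[of p "3 * real (m + 3) / 2"] by linarith
  ultimately show "7.2 \<le> r"
    using power_less_imp_less_base[of "7.2" 2 r] by simp
qed

lemma exists_positive_tribonacci_back:
  fixes p :: real and n :: int and m :: nat
  assumes p: "p^3 = p^2 + p + 1" and m: "1 \<le> m"
    and n: "0.2 * p powr (3 * real (m + 3) / 2) < n"
  obtains a b where "0 < tribonacci_back a b n (m + 2)" and "0 < tribonacci_back a b n (m + 1)"
    and "0 < tribonacci_back a b n m"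
proof -
  \<comment> \<open>Since p^2 - p - 1 = 1 / p, these are the integers nearest to n / p^2 and n / p.\<close>
  define a b where "a = round (n * (p^2 - p - 1)^2)" and "b = round (n * (p^2 - p - 1))"
  define d1 d2 where "d1 = a - n * (p^2 - p - 1)^2" and "d2 = b - n * (p^2 - p - 1)"
  have d: "\<bar>d1\<bar> \<le> 1/2" "\<bar>d2\<bar> \<le> 1/2"
    unfolding d1_def d2_def a_def b_def by (rule of_int_round_abs_le)+
  have ab: "real_of_int a = n * (p^2 - p - 1)^2 + d1" "real_of_int b = n * (p^2 - p - 1) + d2"
    unfolding d1_def d2_def by simp_all
  note large = above_threshold_bounds[OF p m n]
  have E: "279/100 * n \<le> dominant_coord p a b n"
    using dominant_coord_near_eigenvector[OF p large(2) d] unfolding ab .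
  have Q: "subdominant_norm p a b n \<le> 69/100"
    using subdominant_norm_near_eigenvector[OF p d] unfolding ab .
  have "0 < p^(3 * m)"
    using tribonacci_constant_bounds[OF p] by simp
  then have "95 * subdominant_norm p a b n * p^(3 * m) \<le> 95 * (69/100) * p^(3 * m)"
    using Q by (intro mult_right_mono) auto
  also have "\<dots> < 77841/10000 * (real_of_int n)^2"
    using large(1) \<open>0 < p^(3 * m)\<close> by linarith
  also have "\<dots> = (279/100 * n)^2"
    by (simp add: power2_eq_square)
  also have "\<dots> \<le> (dominant_coord p a b n)^2"
    using E large(2) by (intro power_mono) auto
  finally have "95 * subdominant_norm p a b n * p^(3 * m) < (dominant_coord p a b n)^2" .
  moreover have "0 < dominant_coord p a b n"
    using E large(2) by linarith
  ultimately show ?thesis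
    using that tribonacci_back_pos_if_dominant[OF p, of a b n m] by blast
qed

theorem theorem3:
  fixes phi :: real and k :: nat and n :: int
  assumes "phi ^ 3 = phi ^ 2 + phi + 1"
    and "k > 0"
    and "real_of_int n > 0.2 * phi powr (3 * real k / 2)"
  shows "\<exists>a. positive_tribonacci k a \<and> a k = n"
proof (cases "k \<le> 3")
  case True
  have "0 < n"
    using assms(3) powr_ge_zero[of phi "3 * real k / 2"] by linarith
  then have "positive_tribonacci k (\<lambda>_. n)"
    using True unfolding positive_tribonacci_def tribonacci_seq_def by auto
  then show ?thesis
    by blast
next
  case False
  then obtain m where k: "k = m + 3" and "1 \<le> m"
    by (intro that[of "k - 3"]) auto
  then obtain a b where "0 < tribonacci_back a b n (m + 2)" "0 < tribonacci_back a b n (m + 1)"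
    "0 < tribonacci_back a b n m"
    using exists_positive_tribonacci_back[OF assms(1)] assms(3) by blast
  then have "positive_tribonacci k (\<lambda>i. tribonacci_back a b n (k - i))"
    unfolding k by (rule positive_tribonacci_of_back)
  moreover have "tribonacci_back a b n (k - k) = n"
    by simp
  ultimately show ?thesis
    by blast
qed

end
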